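(* Let $n$ be a positive integer and $x\in\Gamma_n$. Then \[ \textsc{BPSP}(x)=\xi_n\bigl(\sigma_{\mathrm{RF}}(x)\bigr)-\textsc{MaxCut}(G_x)=n-\tfrac12+\tfrac12\,\#_{\mathrm{dl}}(x)+\tfrac12\,W_{\mathrm{tot}}(G_x)-\textsc{MaxCut}(G_x), \] and \[ \widetilde{\textsc{BPSP}^*}(x)=\textsc{MaxCut}^*(G_x). \]
   Context: Let $[n]=\{1,\dots,n\}$. $\Gamma_n$ is the set of words $x=(x_1,\dots,x_{2n})\in[n]^{2n}$ in which every symbol $i\in[n]$ occurs exactly twice. Colours are the formal symbols $r,b$; $\neg$ swaps $r$ and $b$, $\neg^0$ is the identity and $\neg^1=\neg$. $[\,\cdot\,]$ is the Iverson bracket (1 if true, 0 otherwise). For $i\in[2n-1]$, $\eta(x,i)=[x_{i+1}\in\{x_1,\dots,x_i\}]\oplus[x_i\in\{x_1,\dots,x_{i-1}\}]$ ($\oplus$ = exclusive or). The set of valid colourings is $\Xi_n(x)=\{f\in\{r,b\}^{2n}:\ \forall i\neq j,\ x_i=x_j\Rightarrow f_i\neq f_j\}$, and for $f\in\{r,b\}^{2n}$, $\xi_n(f)=\sum_{i=1}^{2n-1}[f_i\neq f_{i+1}]$. $\textsc{BPSP}(x)=\min_{f\in\Xi_n(x)}\xi_n(f)$. The red-first colouring $\sigma_{\mathrm{RF}}(x)\in\{r,b\}^{2n}$ has $i$-th entry $r$ if $x_i\notin\{x_1,\dots,x_{i-1}\}$ and $b$ otherwise. For $z\in\{r,b\}^n$,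 $\mathcal E_n(x,z)\in\{r,b\}^{2n}$ has $i$-th entry $\neg^{[x_i\in\{x_1,\dots,x_{i-1}\}]}z_{x_i}$, and $\tilde\xi_n(x,z)=\xi_n(\mathcal E_n(x,z))$; $\widetilde{\textsc{BPSP}^*}(x)=\operatorname{argmin}_{z\in\{r,b\}^n}\tilde\xi_n(x,z)$ (a set). For a subset $e\subseteq[n]$, $\theta_x(e)=-\sum_{i=1}^{2n-1}(-1)^{\eta(x,i)}\delta_{e,\{x_i,x_{i+1}\}}$. The BPSP graph is the weighted graph $G_x=(V_x,E_x,W_x)$ with $V_x=[n]$, $E_x=\{\{x_i,x_{i+1}\}: i\in[2n-1],\ x_i\neq x_{i+1},\ \theta_x(\{x_i,x_{i+1}\})\neq0\}$ and $W_x=\theta_x|_{E_x}$. For a weighted graph $G=(V,E,W)$ with $V=[n]$: $W_{\mathrm{tot}}(G)=\sum_{\{i,j\}\in E}W(\{i,j\})$; for $z\in\{r,b\}^n$, $\mathrm{wt}_G(z)=\sum_{\{i,j\}\in E}W(\{i,j\})[z_i\neq z_j]$; $\textsc{MaxCut}(G)=\max_{z\in\{r,b\}^n}\mathrm{wt}_G(z)$ and $\textsc{MaxCut}^*(G)=\operatorname{argmax}_{z\in\{r,b\}^n}\mathrm{wt}_G(z)$. The double letter count is $\#_{\mathrm{dl}}(x)=|\{i\in[2n-1]: x_i=x_{i+1}\}|$. *)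

theory Defs
  imports Complex_Main
begin

text \<open>Words are lists of length 2n; the paper's 1-based position i is list index i-1.
  Colour vectors z in {r,b}^n are lists of length n; z_a is z ! (a-1).\<close>

datatype colour = Red | Blue

fun neg :: "colour \<Rightarrow> colour" where
  "neg Red = Blue" | "neg Blue = Red"

definition negpow :: "bool \<Rightarrow> colour \<Rightarrow> colour" where
  "negpow e c = (if e then neg c else c)"

definition Gamma :: "nat \<Rightarrow> nat list set" where
  "Gamma n = {x. length x = 2*n \<and> set x \<subseteq> {1..n} \<and> (\<forall>a\<in>{1..n}. count_list x a = 2)}"

definition letter :: "nat list \<Rightarrow> nat \<Rightarrow> nat" where
  "letter x i = x ! (i - 1)"

definition seen :: "nat list \<Rightarrow> nat \<Rightarrow> bool" where
  "seen x i = (letter x i \<in> set (take (i - 1) x))"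

definition eta :: "nat list \<Rightarrow> nat \<Rightarrow> bool" where
  "eta x i = (seen x (i+1) \<noteq> seen x i)"

definition Xi :: "nat \<Rightarrow> nat list \<Rightarrow> colour list set" where
  "Xi n x = {f. length f = 2*n \<and> (\<forall>i\<in>{1..2*n}. \<forall>j\<in>{1..2*n}.
      i \<noteq> j \<and> letter x i = letter x j \<longrightarrow> f ! (i-1) \<noteq> f ! (j-1))}"

definition xi :: "nat \<Rightarrow> colour list \<Rightarrow> nat" where
  "xi n f = (\<Sum>i\<in>{1..2*n-1}. if f ! (i-1) \<noteq> f ! i then 1 else 0)"

definition BPSP :: "nat \<Rightarrow> nat list \<Rightarrow> nat" where
  "BPSP n x = Min (xi n ` Xi n x)"

definition sigma_RF :: "nat \<Rightarrow> nat list \<Rightarrow> colour list" where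
  "sigma_RF n x = map (\<lambda>i. if seen x i then Blue else Red) [1..<2*n+1]"

definition Enc :: "nat \<Rightarrow> nat list \<Rightarrow> colour list \<Rightarrow> colour list" where
  "Enc n x z = map (\<lambda>i. negpow (seen x i) (z ! (letter x i - 1))) [1..<2*n+1]"

definition xi_tilde :: "nat \<Rightarrow> nat list \<Rightarrow> colour list \<Rightarrow> nat" where
  "xi_tilde n x z = xi n (Enc n x z)"

definition BPSP_star_tilde :: "nat \<Rightarrow> nat list \<Rightarrow> colour list set" where
  "BPSP_star_tilde n x = {z. length z = n \<and>
      (\<forall>z'. length z' = n \<longrightarrow> xi_tilde n x z \<le> xi_tilde n x z')}"

definition theta :: "nat \<Rightarrow> nat list \<Rightarrow> nat set \<Rightarrow> int" where
  "theta n x e = - (\<Sum>i\<in>{1..2*n-1}.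
      (if eta x i then -1 else 1) * (if e = {letter x i, letter x (i+1)} then 1 else 0))"

type_synonym wgraph = "nat set \<times> nat set set \<times> (nat set \<Rightarrow> int)"

definition bpsp_graph :: "nat \<Rightarrow> nat list \<Rightarrow> wgraph" where
  "bpsp_graph n x = ({1..n},
     {{letter x i, letter x (i+1)} | i. i \<in> {1..2*n-1} \<and> letter x i \<noteq> letter x (i+1)
        \<and> theta n x {letter x i, letter x (i+1)} \<noteq> 0},
     (\<lambda>e. if e \<in> {{letter x i, letter x (i+1)} | i. i \<in> {1..2*n-1} \<and> letter x i \<noteq> letter x (i+1)
        \<and> theta n x {letter x i, letter x (i+1)} \<noteq> 0} then theta n x e else 0))"

definition edges :: "wgraph \<Rightarrow> nat set set" where "edges G = fst (snd G)"
definition weight :: "wgraph \<Rightarrow> nat set \<Rightarrow> int" where "weight G = snd (snd G)"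

definition W_tot :: "wgraph \<Rightarrow> int" where
  "W_tot G = (\<Sum>e\<in>edges G. weight G e)"

definition cut :: "colour list \<Rightarrow> nat set \<Rightarrow> bool" where
  "cut z e = (\<exists>i\<in>e. \<exists>j\<in>e. z ! (i-1) \<noteq> z ! (j-1))"

definition wt :: "wgraph \<Rightarrow> colour list \<Rightarrow> int" where
  "wt G z = (\<Sum>e\<in>edges G. weight G e * (if cut z e then 1 else 0))"

definition MaxCut :: "nat \<Rightarrow> wgraph \<Rightarrow> int" where
  "MaxCut n G = Max (wt G ` {z. length z = n})"

definition MaxCut_star :: "nat \<Rightarrow> wgraph \<Rightarrow> colour list set" where
  "MaxCut_star n G = {z. length z = n \<and> (\<forall>z'. length z' = n \<longrightarrow> wt G z' \<le> wt G z)}"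

definition dl_count :: "nat \<Rightarrow> nat list \<Rightarrow> nat" where
  "dl_count n x = card {i\<in>{1..2*n-1}. letter x i = letter x (i+1)}"

end

theory Submission imports Defs begin

text \<open>Every valid colouring is \<open>Enc n x z\<close> for some colour vector z, because the two
  occurrences of each letter are one unseen and one seen position. Comparing \<open>Enc n x z\<close> with
  the red-first colouring position by position, the colour change indicator at position i exceeds
  that of \<open>\<sigma>_RF(x)\<close> by \<open>(-1)^\<eta>(x,i) [z_{x_i} \<noteq> z_{x_{i+1}}]\<close>; grouping these terms by the pair
  \<open>{x_i, x_{i+1}}\<close> gives minus the cut weight of z in \<open>G_x\<close>. Hence
  \<open>\<xi>(Enc n x z) = \<xi>(\<sigma>_RF(x)) - wt(z)\<close>, and minimising colour changes is maximising the cut.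
  The closed form of \<open>\<xi>(\<sigma>_RF(x))\<close> comes from summing the signs \<open>(-1)^\<eta>(x,i)\<close>: they add up to
  \<open>2n - 1 - 2 \<xi>(\<sigma>_RF(x))\<close>, equal \<open>-1\<close> at each double letter, and contribute \<open>-W_tot\<close> at the
  remaining positions.\<close>

lemma three_le_count_list:
  assumes "k < l" "l < m" "m < length xs" "xs ! k = a" "xs ! l = a" "xs ! m = a"
  shows "3 \<le> count_list xs a"
proof -
  have "count_list xs a = card {p. p < length xs \<and> xs ! p = a}"
    by (simp add: count_list_eq_length_filter length_filter_conv_card eq_commute)
  moreover have "{k, l, m} \<subseteq> {p. p < length xs \<and> xs ! p = a}"
    using assms by auto
  moreover have "card {k, l, m} = 3"
    using assms by auto
  ultimately show ?thesis
    by (metis card_mono finite_Collect_conjI finite_Collect_less_nat)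
qed

lemma seen_if_earlier_occurrence:
  assumes "1 \<le> i" "i < j" "j \<le> length x" "letter x i = letter x j"
  shows "seen x j"
proof -
  have "take (j - 1) x ! (i - 1) = letter x j"
    using assms by (simp add: letter_def)
  moreover have "i - 1 < length (take (j - 1) x)"
    using assms by simp
  ultimately show ?thesis
    unfolding seen_def by (metis nth_mem)
qed

lemma not_seen_if_later_occurrence:
  assumes "count_list x (letter x i) \<le> 2"
    and "1 \<le> i" "i < j" "j \<le> length x" "letter x i = letter x j"
  shows "\<not> seen x i"
proof
  assume "seen x i"
  then obtain k where "k < i - 1" "x ! k = letter x i"
    using assms by (auto simp: seen_def in_set_conv_nth)
  then have "3 \<le> count_list x (letter x i)"
    using assms by (intro three_le_count_list[of k "i - 1" "j - 1"]) (auto simp: letter_def)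
  with assms(1) show False
    by simp
qed

lemma letter_in_alphabet:
  assumes "x \<in> Gamma n" "1 \<le> i" "i \<le> 2 * n"
  shows "letter x i \<in> {1..n}"
proof -
  have "letter x i \<in> set x"
    using assms by (simp add: Gamma_def letter_def)
  with assms(1) show ?thesis
    by (auto simp: Gamma_def)
qed

lemma seen_neq_if_same_letter:
  assumes x: "x \<in> Gamma n" and "i \<in> {1..2 * n}" "j \<in> {1..2 * n}" "i \<noteq> j"
    and same: "letter x i = letter x j"
  shows "seen x i \<noteq> seen x j"
proof -
  have len: "length x = 2 * n" and twice: "\<And>k. k \<in> {1..2 * n} \<Longrightarrow> count_list x (letter x k) = 2"
    using x letter_in_alphabet[OF x] by (auto simp: Gamma_def)
  have "seen x q \<and> \<not> seen x p"
    if "p \<in> {1..2 * n}" "q \<in> {1..2 * n}" "p < q" "letter x p = letter x q" for p q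
  proof
    show "seen x q"
      using that len by (intro seen_if_earlier_occurrence[of p]) auto
    show "\<not> seen x p"
      using that len twice[of p] by (intro not_seen_if_later_occurrence[of x p q]) auto
  qed
  with assms show ?thesis
    by (cases i j rule: linorder_cases) auto
qed

instance colour :: finite
proof
  show "finite (UNIV :: colour set)"
    by (rule finite_subset[of _ "{Red, Blue}"]) (auto intro: colour.exhaust)
qed

lemma finite_colour_lists_length: "finite {z :: colour list. length z = n}"
  using finite_lists_length_eq[of "UNIV :: colour set" n] by simp

lemma neq_iff_eq_neg: "c \<noteq> d \<longleftrightarrow> c = neg d"
  by (cases c; cases d) simp_all

lemma neg_neg [simp]: "neg (neg c) = c"
  by (cases c) simp_all

lemma neg_neq_self [simp]: "neg c \<noteq> c" "c \<noteq> neg c"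
  by (cases c; simp)+

lemma negpow_negpow [simp]: "negpow s (negpow s c) = c"
  by (cases s; cases c) (simp_all add: negpow_def)

lemma negpow_neq_indicator:
  "(if negpow s c \<noteq> negpow t d then 1 else 0 :: int)
     = (if t \<noteq> s then 1 else 0) + (if t \<noteq> s then -1 else 1) * (if c \<noteq> d then 1 else 0)"
  by (cases s; cases t; cases c; cases d) (simp_all add: negpow_def)

lemma cut_doubleton: "cut z {a, b} \<longleftrightarrow> z ! (a - 1) \<noteq> z ! (b - 1)"
  by (auto simp: cut_def)

lemma nth_upt_from_1:
  assumes "1 \<le> i" "i \<le> m"
  shows "[1..<m + 1] ! (i - 1) = i"
  using assms by (subst nth_upt) auto

lemma length_Enc [simp]: "length (Enc n x z) = 2 * n"
  by (simp add: Enc_def)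

lemma nth_Enc:
  assumes "1 \<le> i" "i \<le> 2 * n"
  shows "Enc n x z ! (i - 1) = negpow (seen x i) (z ! (letter x i - 1))"
  using nth_upt_from_1[OF assms] assms by (simp add: Enc_def del: upt_Suc)

lemma nth_sigma_RF:
  assumes "1 \<le> i" "i \<le> 2 * n"
  shows "sigma_RF n x ! (i - 1) = (if seen x i then Blue else Red)"
  using nth_upt_from_1[OF assms] assms by (simp add: sigma_RF_def del: upt_Suc)

lemma int_xi: "int (xi n f) = (\<Sum>i\<in>{1..2 * n - 1}. if f ! (i - 1) \<noteq> f ! i then 1 else 0)"
  unfolding xi_def of_nat_sum by (rule sum.cong) auto

lemma int_xi_sigma_RF: "int (xi n (sigma_RF n x)) = (\<Sum>i\<in>{1..2 * n - 1}. if eta x i then 1 else 0)"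
  unfolding int_xi
proof (rule sum.cong)
  fix i assume "i \<in> {1..2 * n - 1}"
  then have "sigma_RF n x ! (i - 1) = (if seen x i then Blue else Red)"
    and "sigma_RF n x ! i = (if seen x (i + 1) then Blue else Red)"
    using nth_sigma_RF[of i n x] nth_sigma_RF[of "i + 1" n x] by auto
  then show "(if sigma_RF n x ! (i - 1) \<noteq> sigma_RF n x ! i then 1 else 0 :: int)
      = (if eta x i then 1 else 0)"
    by (simp add: eta_def)
qed simp

definition edge_at :: "nat list \<Rightarrow> nat \<Rightarrow> nat set" where
  "edge_at x i = {letter x i, letter x (i + 1)}"

definition eta_sign :: "nat list \<Rightarrow> nat \<Rightarrow> int" where
  "eta_sign x i = (if eta x i then -1 else 1)"

lemma Enc_change_indicator:
  assumes "i \<in> {1..2 * n - 1}"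
  shows "(if Enc n x z ! (i - 1) \<noteq> Enc n x z ! i then 1 else 0 :: int)
     = (if eta x i then 1 else 0) + eta_sign x i * (if cut z (edge_at x i) then 1 else 0)"
proof -
  have "Enc n x z ! (i - 1) = negpow (seen x i) (z ! (letter x i - 1))"
    and "Enc n x z ! i = negpow (seen x (i + 1)) (z ! (letter x (i + 1) - 1))"
    using assms nth_Enc[of i n x z] nth_Enc[of "i + 1" n x z] by auto
  then show ?thesis
    by (simp only: negpow_neq_indicator eta_def eta_sign_def edge_at_def cut_doubleton)
qed

lemma int_xi_Enc:
  "int (xi n (Enc n x z)) = (\<Sum>i\<in>{1..2 * n - 1}. if eta x i then 1 else 0)
     + (\<Sum>i\<in>{1..2 * n - 1}. eta_sign x i * (if cut z (edge_at x i) then 1 else 0))"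
  unfolding int_xi sum.distrib[symmetric] by (rule sum.cong[OF refl]) (rule Enc_change_indicator)

lemma edges_bpsp_graph:
  "edges (bpsp_graph n x) = {edge_at x i | i. i \<in> {1..2 * n - 1}
      \<and> letter x i \<noteq> letter x (i + 1) \<and> theta n x (edge_at x i) \<noteq> 0}"
  by (simp add: edges_def bpsp_graph_def edge_at_def)

lemma weight_bpsp_graph:
  "e \<in> edges (bpsp_graph n x) \<Longrightarrow> weight (bpsp_graph n x) e = theta n x e"
  unfolding edges_def weight_def bpsp_graph_def by auto

lemma theta_eq_sum_eta_sign:
  "theta n x e = - (\<Sum>i | i \<in> {1..2 * n - 1} \<and> edge_at x i = e. eta_sign x i)"
  unfolding theta_def sum.inter_filter[OF finite_atLeastAtMost]
  by (intro arg_cong[where f = uminus] sum.cong) (auto simp: eta_sign_def edge_at_def)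

lemma sum_eta_sign_eq_sum_edges:
  fixes g :: "nat set \<Rightarrow> int"
  assumes singleton: "\<And>a. g {a} = 0"
  shows "(\<Sum>i\<in>{1..2 * n - 1}. eta_sign x i * g (edge_at x i))
       = - (\<Sum>e\<in>edges (bpsp_graph n x). theta n x e * g e)"
proof -
  let ?I = "{1..2 * n - 1}"
  have "(\<Sum>i\<in>?I. eta_sign x i * g (edge_at x i))
      = (\<Sum>e\<in>edge_at x ` ?I. \<Sum>i | i \<in> ?I \<and> edge_at x i = e. eta_sign x i * g e)"
    by (subst sum.image_gen[of ?I _ "edge_at x"]) (auto intro!: sum.cong)
  also have "\<dots> = (\<Sum>e\<in>edge_at x ` ?I. - (theta n x e * g e))"
    by (rule sum.cong) (simp_all add: theta_eq_sum_eta_sign sum_distrib_right)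
  also have "\<dots> = (\<Sum>e\<in>edges (bpsp_graph n x). - (theta n x e * g e))"
  proof (rule sum.mono_neutral_right)
    show "edges (bpsp_graph n x) \<subseteq> edge_at x ` ?I"
      unfolding edges_bpsp_graph by auto
    show "\<forall>e\<in>edge_at x ` ?I - edges (bpsp_graph n x). - (theta n x e * g e) = 0"
      using singleton unfolding edges_bpsp_graph by (auto simp: edge_at_def)
  qed simp
  finally show ?thesis
    by (simp add: sum_negf)
qed

lemma wt_bpsp_graph:
  "wt (bpsp_graph n x) z = (\<Sum>e\<in>edges (bpsp_graph n x). theta n x e * (if cut z e then 1 else 0))"
  unfolding wt_def by (rule sum.cong) (simp_all add: weight_bpsp_graph)

theorem int_xi_Enc_eq_xi_sigma_RF_minus_wt:
  "int (xi n (Enc n x z)) = int (xi n (sigma_RF n x)) - wt (bpsp_graph n x) z"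
  using sum_eta_sign_eq_sum_edges[where g = "\<lambda>e. if cut z e then 1 else 0" and n = n and x = x]
  unfolding int_xi_Enc int_xi_sigma_RF wt_bpsp_graph by (simp add: cut_def)

lemma W_tot_bpsp_graph:
  "W_tot (bpsp_graph n x)
     = - (\<Sum>i | i \<in> {1..2 * n - 1} \<and> letter x i \<noteq> letter x (i + 1). eta_sign x i)"
proof -
  define g :: "nat set \<Rightarrow> int" where "g e = (if card e = 2 then 1 else 0)" for e
  have "W_tot (bpsp_graph n x) = (\<Sum>e\<in>edges (bpsp_graph n x). theta n x e * g e)"
    unfolding W_tot_def g_def
    by (rule sum.cong) (auto simp: weight_bpsp_graph edges_bpsp_graph edge_at_def)
  also have "\<dots> = - (\<Sum>i\<in>{1..2 * n - 1}. eta_sign x i * g (edge_at x i))"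
    using sum_eta_sign_eq_sum_edges[where g = g] by (simp add: g_def)
  also have "(\<Sum>i\<in>{1..2 * n - 1}. eta_sign x i * g (edge_at x i))
      = (\<Sum>i | i \<in> {1..2 * n - 1} \<and> letter x i \<noteq> letter x (i + 1). eta_sign x i)"
    unfolding sum.inter_filter[OF finite_atLeastAtMost] g_def edge_at_def
    by (rule sum.cong) auto
  finally show ?thesis .
qed

lemma sum_eta_sign_double_letters:
  assumes "x \<in> Gamma n"
  shows "(\<Sum>i | i \<in> {1..2 * n - 1} \<and> letter x i = letter x (i + 1). eta_sign x i)
       = - int (dl_count n x)"
proof -
  have "eta_sign x i = -1" if "i \<in> {1..2 * n - 1}" "letter x i = letter x (i + 1)" for i
  proof -
    have "i \<in> {1..2 * n}" "i + 1 \<in> {1..2 * n}"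
      using that by auto
    then show ?thesis
      using seen_neq_if_same_letter[OF assms, of i "i + 1"] that
      by (auto simp: eta_sign_def eta_def)
  qed
  then show ?thesis
    unfolding dl_count_def by simp
qed

lemma two_xi_sigma_RF:
  assumes "x \<in> Gamma n" "n > 0"
  shows "2 * int (xi n (sigma_RF n x))
       = 2 * int n - 1 + int (dl_count n x) + W_tot (bpsp_graph n x)"
proof -
  let ?I = "{1..2 * n - 1}"
  have "(\<Sum>i\<in>?I. eta_sign x i) = (\<Sum>i\<in>?I. 1 - 2 * (if eta x i then 1 else 0))"
    by (rule sum.cong) (simp_all add: eta_sign_def)
  also have "\<dots> = 2 * int n - 1 - 2 * int (xi n (sigma_RF n x))"
    using assms(2) by (simp add: int_xi_sigma_RF sum_subtractf sum_distrib_left)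
  finally have "(\<Sum>i\<in>?I. eta_sign x i) = 2 * int n - 1 - 2 * int (xi n (sigma_RF n x))" .
  moreover have "(\<Sum>i\<in>?I. eta_sign x i)
      = (\<Sum>i | i \<in> ?I \<and> letter x i \<noteq> letter x (i + 1). eta_sign x i)
        + (\<Sum>i | i \<in> ?I \<and> letter x i = letter x (i + 1). eta_sign x i)"
    using sum.Int_Diff[of ?I "eta_sign x" "{i. letter x i \<noteq> letter x (i + 1)}"]
    by (simp add: Int_def set_diff_eq)
  ultimately show ?thesis
    using W_tot_bpsp_graph[of n x] sum_eta_sign_double_letters[OF assms(1)] by linarith
qed

lemma Enc_in_Xi:
  assumes "x \<in> Gamma n"
  shows "Enc n x z \<in> Xi n x"
  unfolding Xi_def
proof (intro CollectI conjI ballI impI)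
  fix i j assume i: "i \<in> {1..2 * n}" and j: "j \<in> {1..2 * n}"
    and ij: "i \<noteq> j \<and> letter x i = letter x j"
  then have "seen x i \<noteq> seen x j"
    using seen_neq_if_same_letter[OF assms] by blast
  with i j ij show "Enc n x z ! (i - 1) \<noteq> Enc n x z ! (j - 1)"
    using nth_Enc[of i n x z] nth_Enc[of j n x z] by (auto simp: negpow_def)
qed simp

lemma Xi_subset_image_Enc:
  assumes x: "x \<in> Gamma n" and f: "f \<in> Xi n x"
  shows "f \<in> Enc n x ` {z. length z = n}"
proof -
  define p where "p a = (SOME i. i \<in> {1..2 * n} \<and> letter x i = a)" for a
  define z where "z = map (\<lambda>a. negpow (seen x (p a)) (f ! (p a - 1))) [1..<n + 1]"
    \<comment> \<open>\<open>Enc n x z\<close> agrees with f at the occurrence p a of a, hence, as f is valid, also at the other\<close>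
  have "Enc n x z ! k = f ! k" if k: "k < 2 * n" for k
  proof -
    define i where "i = k + 1"
    define a where "a = letter x i"
    have i: "i \<in> {1..2 * n}" "k = i - 1"
      using k by (auto simp: i_def)
    then have a: "a \<in> {1..n}"
      using letter_in_alphabet[OF x] by (simp add: a_def)
    have "\<exists>j. j \<in> {1..2 * n} \<and> letter x j = a"
      using i a_def by blast
    then have pa: "p a \<in> {1..2 * n}" "letter x (p a) = a"
      unfolding p_def by (metis (mono_tags, lifting) someI_ex)+
    have za: "z ! (a - 1) = negpow (seen x (p a)) (f ! (p a - 1))"
    proof -
      have "1 \<le> a" "a \<le> n"
        using a by auto
      then show ?thesis
        using nth_upt_from_1[of a n] by (simp add: z_def del: upt_Suc)
    qed
    have Enc_k: "Enc n x z ! k = negpow (seen x i) (z ! (a - 1))"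
      using nth_Enc[of i n x z] i by (simp add: a_def)
    show ?thesis
    proof (cases "p a = i")
      case True
      then show ?thesis
        using Enc_k za i by simp
    next
      case False
      then have "seen x (p a) \<noteq> seen x i" and "f ! (p a - 1) \<noteq> f ! (i - 1)"
        using seen_neq_if_same_letter[OF x pa(1) i(1)] f pa i a_def unfolding Xi_def by auto
      then have "seen x (p a) = (\<not> seen x i)" and "f ! (p a - 1) = neg (f ! (i - 1))"
        by (simp_all add: neq_iff_eq_neg)
      then show ?thesis
        using Enc_k za i by (cases "seen x i") (simp_all add: negpow_def)
    qed
  qed
  moreover have "length f = 2 * n"
    using f by (simp add: Xi_def)
  ultimately have "Enc n x z = f"
    by (intro nth_equalityI) simp_all
  moreover have "length z = n"
    by (simp add: z_def)
  ultimately show ?thesis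
    by blast
qed

lemma Xi_eq_image_Enc:
  assumes "x \<in> Gamma n"
  shows "Xi n x = Enc n x ` {z. length z = n}"
  using Enc_in_Xi[OF assms] Xi_subset_image_Enc[OF assms] by blast

lemma BPSP_eq_xi_sigma_RF_minus_MaxCut:
  assumes "x \<in> Gamma n"
  shows "int (BPSP n x) = int (xi n (sigma_RF n x)) - MaxCut n (bpsp_graph n x)"
proof -
  let ?Z = "{z :: colour list. length z = n}"
  let ?G = "bpsp_graph n x"
  let ?c = "int (xi n (sigma_RF n x))"
  have Z: "finite ?Z" "?Z \<noteq> {}"
    using finite_colour_lists_length[of n] by (auto intro: exI[of _ "replicate n Red"])
  have "int (BPSP n x) = Min (int ` xi n ` Xi n x)"
    unfolding BPSP_def using Z
    by (intro mono_Min_commute) (auto simp: mono_def Xi_eq_image_Enc[OF assms])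
  also have "int ` xi n ` Xi n x = (\<lambda>z. - wt ?G z + ?c) ` ?Z"
    by (auto simp: Xi_eq_image_Enc[OF assms] image_image int_xi_Enc_eq_xi_sigma_RF_minus_wt)
  also have "Min \<dots> = Min (uminus ` wt ?G ` ?Z) + ?c"
    using Min_add_commute[OF Z, of "\<lambda>z. - wt ?G z" ?c] by (simp add: image_image)
  also have "Min (uminus ` wt ?G ` ?Z) = - MaxCut n ?G"
    unfolding MaxCut_def using Z by simp
  finally show ?thesis
    by simp
qed

lemma xi_tilde_le_iff:
  "xi_tilde n x z \<le> xi_tilde n x z' \<longleftrightarrow> wt (bpsp_graph n x) z' \<le> wt (bpsp_graph n x) z"
  using int_xi_Enc_eq_xi_sigma_RF_minus_wt[of n x z] int_xi_Enc_eq_xi_sigma_RF_minus_wt[of n x z']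
  unfolding xi_tilde_def by linarith

lemma BPSP_star_tilde_eq_MaxCut_star: "BPSP_star_tilde n x = MaxCut_star n (bpsp_graph n x)"
  unfolding BPSP_star_tilde_def MaxCut_star_def by (simp add: xi_tilde_le_iff)

theorem corollary4:
  fixes n :: nat and x :: "nat list"
  assumes "n > 0" and "x \<in> Gamma n"
  shows "real (BPSP n x) = real (xi n (sigma_RF n x)) - real_of_int (MaxCut n (bpsp_graph n x))
       \<and> real (xi n (sigma_RF n x)) - real_of_int (MaxCut n (bpsp_graph n x))
           = real n - 1/2 + real (dl_count n x) / 2 + real_of_int (W_tot (bpsp_graph n x)) / 2
             - real_of_int (MaxCut n (bpsp_graph n x))
       \<and> BPSP_star_tilde n x = MaxCut_star n (bpsp_graph n x)"
proof (intro conjI)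
  have "real_of_int (int (BPSP n x))
      = real_of_int (int (xi n (sigma_RF n x)) - MaxCut n (bpsp_graph n x))"
    using BPSP_eq_xi_sigma_RF_minus_MaxCut[OF assms(2)] by simp
  then show "real (BPSP n x) = real (xi n (sigma_RF n x)) - real_of_int (MaxCut n (bpsp_graph n x))"
    by simp
  have "real_of_int (2 * int (xi n (sigma_RF n x)))
      = real_of_int (2 * int n - 1 + int (dl_count n x) + W_tot (bpsp_graph n x))"
    using two_xi_sigma_RF[OF assms(2,1)] by simp
  then show "real (xi n (sigma_RF n x)) - real_of_int (MaxCut n (bpsp_graph n x))
      = real n - 1/2 + real (dl_count n x) / 2 + real_of_int (W_tot (bpsp_graph n x)) / 2
        - real_of_int (MaxCut n (bpsp_graph n x))"
    by simp
  show "BPSP_star_tilde n x = MaxCut_star n (bpsp_graph n x)"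
    by (rule BPSP_star_tilde_eq_MaxCut_star)
qed

end
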